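(* Assume (AS1) and (AS2) below. Then the set $$\mathcal{C}=\Big\{\xi=(\xi_0,\xi_1,\dots,\xi_L)\in\mathbb{R}^{L+1}\;:\;\exists\,p\in\mathcal{P}\ \text{with}\ v(p)\ge \xi_0\ \text{and}\ u_i(p)\ge \xi_i+c_i\ \text{for all } i=1,\dots,L\Big\}$$ is convex.
   Context: Setting. Fix an integer $L\ge 1$ and a constant $P_{\max}>0$. A random channel matrix $H$ takes values in a set $\mathcal{H}\subseteq\mathbb{R}^{L\times L}$ and has distribution $\mu$ on the Borel $\sigma$-algebra of $\mathcal{H}$. $\mathbb{E}$ denotes expectation with respect to $\mu$. A power policy is a Borel-measurable map $p:\mathcal{H}\to\mathbb{R}^L$, $p(H)=(p_1(H),\dots,p_L(H))$. Fix a measurable "selection pattern" $\sigma:\mathcal{H}\to\{0,1\}^L$. (In the paper, $\sigma_i(H)=\mathbb{1}(p^\star_i(H)>0)$ is the zero/non-zero pattern of an optimal policy $p^\star$.) Define the feasible policy set $$\mathcal{P}=\{p \text{ measurable}: p(H)\in[0,P_{\max}]^L \text{ and } \mathbb{1}(p_i(H)>0)=\sigma_i(H)\ \text{for all } i \text{ and all } H\in\mathcal{H}\}.$$ Assume $\rho_i:=\mu(\{H:\sigma_i(H)=1\})>0$ for every $i$. Let $f_0:\mathbb{R}^L\times\mathbb{R}^{L\times L}\to\mathbb{R}^L$ and $f_{c,i}:\mathbb{R}^L\times\mathbb{R}^{L\times L}\to\mathbb{R}$ for $i=1,\dots,L$ be measurable. Assume that for every $p\in\mathcal{P}$ the functions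 $H\mapsto f_0(p(H),H)$ and $H\mapsto f_{c,i}(p(H),H)$ are $\mu$-integrable. Let $g:\mathbb{R}^L\to\mathbb{R}$. For $p\in\mathcal{P}$, define $$v(p)=g\big(\mathbb{E}[f_0(p(H),H)]\big),\qquad u_i(p)=\mathbb{E}\big[f_{c,i}(p(H),H)\,\big|\,p_i(H)>0\big]=\frac{1}{\rho_i}\int_{\{\sigma_i=1\}} f_{c,i}(p(H),H)\,d\mu.$$ Here $\mathbb{E}$ of a vector is taken componentwise. The constants $c_1,\dots,c_L\ge 0$ are fixed. Assumptions. (AS1) $\mu$ is non-atomic. (AS2) $g$ is concave and non-decreasing (componentwise). *)

theory Defs
  imports "HOL-Probability.Probability"
begin

text \<open>Channel matrices H are elements of real^'n^'n (L x L with L = CARD('n));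
  power vectors are elements of real^'n. The distribution mu is the measure M.\<close>

definition nonatomic :: "'a measure \<Rightarrow> bool" where
  "nonatomic M \<longleftrightarrow> (\<forall>A\<in>sets M. measure M A > 0 \<longrightarrow>
      (\<exists>B\<in>sets M. B \<subseteq> A \<and> 0 < measure M B \<and> measure M B < measure M A))"

definition feasible_policies ::
  "('h::topological_space) measure \<Rightarrow> real \<Rightarrow> ('h \<Rightarrow> 'n::finite \<Rightarrow> bool) \<Rightarrow> ('h \<Rightarrow> real^'n) set" where
  "feasible_policies M Pmax \<sigma> =
     {p. p \<in> borel_measurable M \<and>
         (\<forall>H\<in>space M. \<forall>i. 0 \<le> p H $ i \<and> p H $ i \<le> Pmax \<and> ((p H $ i > 0) \<longleftrightarrow> \<sigma> H i))}"

definition objective ::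
  "'h measure \<Rightarrow> (real^'n \<Rightarrow> real) \<Rightarrow> (real^'n::finite \<Rightarrow> 'h \<Rightarrow> real^'n) \<Rightarrow> ('h \<Rightarrow> real^'n) \<Rightarrow> real" where
  "objective M g f0 p = g (\<chi> j. (LINT H|M. f0 (p H) H $ j))"

definition cond_constraint ::
  "'h measure \<Rightarrow> ('h \<Rightarrow> 'n::finite \<Rightarrow> bool) \<Rightarrow> ('n \<Rightarrow> real^'n \<Rightarrow> 'h \<Rightarrow> real) \<Rightarrow> ('h \<Rightarrow> real^'n) \<Rightarrow> 'n \<Rightarrow> real" where
  "cond_constraint M \<sigma> fc p i =
     (LINT H:{H\<in>space M. \<sigma> H i}|M. fc i (p H) H) / measure M {H\<in>space M. \<sigma> H i}"

text \<open>The set C in R^(L+1), represented as real x real^'n (xi_0, (xi_1..xi_L)).\<close>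
definition achievable_set ::
  "('h::topological_space) measure \<Rightarrow> real \<Rightarrow> ('h \<Rightarrow> 'n::finite \<Rightarrow> bool) \<Rightarrow> (real^'n \<Rightarrow> real)
   \<Rightarrow> (real^'n \<Rightarrow> 'h \<Rightarrow> real^'n) \<Rightarrow> ('n \<Rightarrow> real^'n \<Rightarrow> 'h \<Rightarrow> real) \<Rightarrow> real^'n \<Rightarrow> (real \<times> (real^'n)) set" where
  "achievable_set M Pmax \<sigma> g f0 fc c =
     {(\<xi>0, \<xi>). \<exists>p\<in>feasible_policies M Pmax \<sigma>.
        objective M g f0 p \<ge> \<xi>0 \<and> (\<forall>i. cond_constraint M \<sigma> fc p i \<ge> \<xi> $ i + c $ i)}"

end

theory Submission
  imports Defs
begin

text \<open>Given feasible policies \<open>p1\<close>, \<open>p2\<close> and \<open>u \<in> {0..1}\<close>, Lyapunov's convexity theorem for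
  the non-atomic measure yields an event \<open>A\<close> such that, for each of the finitely many integrands
  entering \<open>v\<close> and the \<open>u_i\<close> (the components of \<open>f0\<close>, and \<open>fc i\<close> restricted to \<open>\<sigma>_i = 1\<close>),
  the difference between its values under \<open>p1\<close> and under \<open>p2\<close> integrates over \<open>A\<close> to exactly
  \<open>u\<close> times its total. The policy equal to \<open>p1\<close> on \<open>A\<close> and to \<open>p2\<close> off \<open>A\<close> is then feasible
  with expectations the \<open>u\<close>-convex combinations of those of \<open>p1\<close> and \<open>p2\<close>, and concavity of
  \<open>g\<close> does the rest.

  Lyapunov's theorem for finitely many integrable functions reduces, after reweighting the
  measure by the density \<open>1 + (\<Sum>h\<in>S. \<bar>h\<bar>)\<close>, to functions bounded by 1. For these, induction
  on their number yields monotone families \<open>C t \<subseteq> E\<close> with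
  \<open>(LINT x:C t|M. g x) = t * (LINT x:E|M. g x)\<close>: such families for the old functions let every
  set be halved for one more function by the intermediate value theorem, and repeated halving
  along the dyadic fractions gives a family again. The base case is Sierpinski's theorem that a
  non-atomic measure takes every intermediate value.\<close>

section \<open>Integrals of functions bounded by one\<close>

context finite_measure
begin

definition unit_bounded :: "('a \<Rightarrow> real) \<Rightarrow> bool" where
  "unit_bounded g \<longleftrightarrow> g \<in> borel_measurable M \<and> (\<forall>x\<in>space M. \<bar>g x\<bar> \<le> 1)"

lemma unit_bounded_one: "unit_bounded (\<lambda>_. 1)"
  by (simp add: unit_bounded_def)

lemma set_integrable_unit_bounded:
  assumes "unit_bounded g" "A \<in> sets M"
  shows "set_integrable M A g"
  unfolding set_integrable_def
proof (rule integrable_const_bound[where B=1])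
  show "AE x in M. norm (indicator A x *\<^sub>R g x) \<le> 1"
    using assms by (auto simp: unit_bounded_def indicator_def)
  show "(\<lambda>x. indicator A x *\<^sub>R g x) \<in> borel_measurable M"
    using assms by (auto simp: unit_bounded_def)
qed

lemma set_integral_one: "A \<in> sets M \<Longrightarrow> (LINT x:A|M. 1) = measure M A"
  by (simp add: set_integral_const)

lemma abs_set_integral_le_measure:
  assumes "unit_bounded g" "A \<in> sets M"
  shows "\<bar>LINT x:A|M. g x\<bar> \<le> measure M A"
proof -
  have g: "set_integrable M A g"
    using set_integrable_unit_bounded[OF assms] .
  have "set_integrable M A (\<lambda>_. c)" for c :: real
    unfolding set_integrable_def using assms(2) by (intro integrable_mult_indicator) auto
  moreover have "-1 \<le> g x" "g x \<le> 1" if "x \<in> A" for x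
    using assms sets.sets_into_space that by (auto simp: unit_bounded_def abs_le_iff)
  ultimately have "(LINT x:A|M. -1) \<le> (LINT x:A|M. g x)" "(LINT x:A|M. g x) \<le> (LINT x:A|M. 1)"
    using g by (auto intro: set_integral_mono)
  then show ?thesis
    using assms(2) by (simp add: set_integral_const abs_le_iff)
qed

lemma set_integral_Diff_unit_bounded:
  assumes "unit_bounded g" "A \<in> sets M" "B \<in> sets M" "B \<subseteq> A"
  shows "(LINT x:A-B|M. g x) = (LINT x:A|M. g x) - (LINT x:B|M. g x)"
proof -
  have "(LINT x:A|M. g x) = (LINT x:(A-B) \<union> B|M. g x)"
    using assms(4) by (simp add: Un_absorb2)
  also have "\<dots> = (LINT x:A-B|M. g x) + (LINT x:B|M. g x)"
    using assms by (intro set_integral_Un set_integrable_unit_bounded) auto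
  finally show ?thesis by simp
qed

lemma abs_set_integral_diff_le_measure_diff:
  assumes "unit_bounded g" "A \<in> sets M" "B \<in> sets M" "B \<subseteq> A"
  shows "\<bar>(LINT x:A|M. g x) - (LINT x:B|M. g x)\<bar> \<le> measure M A - measure M B"
  using abs_set_integral_le_measure[OF assms(1), of "A - B"]
    set_integral_Diff_unit_bounded[OF assms] assms
  by (simp add: finite_measure_Diff)

section \<open>Sierpinski's theorem\<close>

lemma nonatomic_small_subset:
  assumes na: "nonatomic M" and A: "A \<in> sets M" "measure M A > 0" and e: "e > 0"
  shows "\<exists>B\<in>sets M. B \<subseteq> A \<and> 0 < measure M B \<and> measure M B < e"
proof -
  have "\<exists>B\<in>sets M. B \<subseteq> A \<and> 0 < measure M B \<and> measure M B \<le> measure M A / 2^n" for n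
  proof (induction n)
    case 0
    then show ?case using A by auto
  next
    case (Suc n)
    then obtain B where B: "B \<in> sets M" "B \<subseteq> A" "0 < measure M B" "measure M B \<le> measure M A / 2^n"
      by blast
    then obtain B' where B': "B' \<in> sets M" "B' \<subseteq> B" "0 < measure M B'" "measure M B' < measure M B"
      using na unfolding nonatomic_def by blast
    have diff: "measure M (B - B') = measure M B - measure M B'"
      using B B' by (simp add: finite_measure_Diff)
    show ?case
    proof (cases "measure M B' \<le> measure M B / 2")
      case True
      then show ?thesis using B B' by (intro bexI[of _ B']) auto
    next
      case False
      then show ?thesis using B B' diff by (intro bexI[of _ "B - B'"]) auto
    qed
  qed
  moreover obtain n where "measure M A / e < 2^n"
    using real_arch_pow[of 2 "measure M A / e"] by auto
  then have "measure M A / 2^n < e"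
    using e by (simp add: field_simps)
  ultimately show ?thesis
    by (meson le_less_trans)
qed

definition admissible_increments :: "'a set \<Rightarrow> real \<Rightarrow> 'a set \<Rightarrow> 'a set set" where
  "admissible_increments E t X = {B \<in> sets M. B \<subseteq> E - X \<and> measure M B \<le> t - measure M X}"

lemma bdd_above_measure_admissible_increments: "bdd_above (measure M ` admissible_increments E t X)"
  by (rule bdd_aboveI[where M="measure M (space M)"]) (auto simp: admissible_increments_def bounded_measure)

lemma admissible_increment_near_Sup:
  assumes "measure M X \<le> t"
  shows "\<exists>B. B \<in> admissible_increments E t X \<and> Sup (measure M ` admissible_increments E t X) \<le> 2 * measure M B"
proof (cases "Sup (measure M ` admissible_increments E t X) \<le> 0")
  case True
  moreover have "{} \<in> admissible_increments E t X"
    using assms by (auto simp: admissible_increments_def)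
  ultimately show ?thesis by force
next
  case False
  have "measure M ` admissible_increments E t X \<noteq> {}"
    using assms by (auto simp: admissible_increments_def intro!: image_eqI[of _ _ "{}"])
  moreover have "Sup (measure M ` admissible_increments E t X) / 2 < Sup (measure M ` admissible_increments E t X)"
    using False by simp
  ultimately obtain B where "B \<in> admissible_increments E t X"
    "Sup (measure M ` admissible_increments E t X) / 2 < measure M B"
    using less_cSup_iff[OF _ bdd_above_measure_admissible_increments] by blast
  then show ?thesis by force
qed

definition greedy_increment :: "'a set \<Rightarrow> real \<Rightarrow> 'a set \<Rightarrow> 'a set" where
  "greedy_increment E t X = (SOME B. B \<in> admissible_increments E t X \<and>
     Sup (measure M ` admissible_increments E t X) \<le> 2 * measure M B)"

definition greedy_exhaustion :: "'a set \<Rightarrow> real \<Rightarrow> nat \<Rightarrow> 'a set" where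
  "greedy_exhaustion E t n = ((\<lambda>X. X \<union> greedy_increment E t X) ^^ n) {}"

lemma greedy_increment:
  assumes "measure M X \<le> t"
  shows "greedy_increment E t X \<in> admissible_increments E t X"
    "Sup (measure M ` admissible_increments E t X) \<le> 2 * measure M (greedy_increment E t X)"
  using someI_ex[OF admissible_increment_near_Sup[OF assms]] unfolding greedy_increment_def by blast+

lemma greedy_exhaustion_0 [simp]: "greedy_exhaustion E t 0 = {}"
  by (simp add: greedy_exhaustion_def)

lemma greedy_exhaustion_Suc [simp]:
  "greedy_exhaustion E t (Suc n) = greedy_exhaustion E t n \<union> greedy_increment E t (greedy_exhaustion E t n)"
  by (simp add: greedy_exhaustion_def)

lemma measure_Un_greedy_increment:
  assumes "X \<in> sets M" "measure M X \<le> t"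
  shows "measure M (X \<union> greedy_increment E t X) = measure M X + measure M (greedy_increment E t X)"
  using assms greedy_increment(1)[OF assms(2)]
  by (intro finite_measure_Union) (auto simp: admissible_increments_def)

lemma greedy_exhaustion:
  assumes "0 \<le> t"
  shows "greedy_exhaustion E t n \<in> sets M \<and> greedy_exhaustion E t n \<subseteq> E \<and> measure M (greedy_exhaustion E t n) \<le> t"
proof (induction n)
  case (Suc n)
  then show ?case
    using greedy_increment(1)[of "greedy_exhaustion E t n" t E]
      measure_Un_greedy_increment[of "greedy_exhaustion E t n" t E]
    by (auto simp: admissible_increments_def)
qed (use assms in simp)

lemma nonatomic_measure_attains:
  assumes na: "nonatomic M" and E: "E \<in> sets M" and t: "0 \<le> t" "t \<le> measure M E"
  shows "\<exists>A\<in>sets M. A \<subseteq> E \<and> measure M A = t"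
proof -
  let ?X = "greedy_exhaustion E t"
  note X = greedy_exhaustion[OF t(1), of E]
  define A where "A = (\<Union>n. ?X n)"
  have A: "A \<in> sets M" "A \<subseteq> E" "?X n \<subseteq> A" for n
    using X by (auto simp: A_def)
  have "(\<lambda>n. measure M (?X n)) \<longlonglongrightarrow> measure M A"
    unfolding A_def by (rule finite_Lim_measure_incseq) (use X in \<open>auto intro: incseq_SucI\<close>)
  then have A_le: "measure M A \<le> t"
    by (rule LIMSEQ_le_const2) (use X in auto)
  have "measure M A = t"
  proof (rule ccontr)
    assume "measure M A \<noteq> t"
    with A_le have "measure M (E - A) > 0"
      using A E t by (simp add: finite_measure_Diff)
    then obtain D where D: "D \<in> sets M" "D \<subseteq> E - A" "0 < measure M D" "measure M D < t - measure M A"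
      using nonatomic_small_subset[OF na, of "E - A" "t - measure M A"] A E A_le \<open>measure M A \<noteq> t\<close>
      by auto
    \<comment> \<open>\<open>D\<close> stays admissible at every stage, so each increment has measure at least \<open>measure M D / 2\<close>.\<close>
    have X_le_A: "measure M (?X n) \<le> measure M A" for n
      using A X by (intro finite_measure_mono) auto
    have "D \<in> admissible_increments E t (?X n)" for n
      using D A(3)[of n] X_le_A[of n] by (auto simp: admissible_increments_def)
    then have D_le: "measure M D \<le> Sup (measure M ` admissible_increments E t (?X n))" for n
      by (intro cSup_upper[OF _ bdd_above_measure_admissible_increments]) auto
    have D_half: "measure M D / 2 \<le> measure M (greedy_increment E t (?X n))" for n
      using D_le[of n] greedy_increment(2)[of "?X n" t E] X[of n] by linarith
    have growth: "real n * (measure M D / 2) \<le> measure M (?X n)" for n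
    proof (induction n)
      case (Suc n)
      then show ?case
        using D_half[of n] X[of n] measure_Un_greedy_increment[of "?X n" t E] by (simp add: algebra_simps)
    qed simp
    obtain n where "t / (measure M D / 2) < real n"
      using reals_Archimedean2 by blast
    then have "t < real n * (measure M D / 2)"
      using D(3) by (simp add: field_simps)
    then show False
      using growth[of n] X[of n] by linarith
  qed
  then show ?thesis
    using A by blast
qed

end

section \<open>Lyapunov's convexity theorem\<close>

lemma tendsto_dyadic_floor:
  fixes t :: real
  assumes "0 \<le> t"
  shows "(\<lambda>n. real (nat \<lfloor>t * 2^n\<rfloor>) / 2^n) \<longlonglongrightarrow> t"
proof (rule tendsto_sandwich[of "\<lambda>n. t - inverse (2^n)" _ _ "\<lambda>_. t"])
  have "t - inverse (2^n) \<le> real (nat \<lfloor>t * 2^n\<rfloor>) / 2^n \<and> real (nat \<lfloor>t * 2^n\<rfloor>) / 2^n \<le> t"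
    for n :: nat
  proof -
    have "real (nat \<lfloor>t * 2^n\<rfloor>) = \<lfloor>t * 2^n\<rfloor>"
      using assms by simp
    then have "t * 2^n - 1 \<le> real (nat \<lfloor>t * 2^n\<rfloor>)" "real (nat \<lfloor>t * 2^n\<rfloor>) \<le> t * 2^n"
      using floor_correct[of "t * 2^n"] by linarith+
    then have "(t * 2^n - 1) / 2^n \<le> real (nat \<lfloor>t * 2^n\<rfloor>) / 2^n"
      "real (nat \<lfloor>t * 2^n\<rfloor>) / 2^n \<le> t * 2^n / 2^n"
      by (intro divide_right_mono; simp)+
    then show ?thesis
      by (simp add: diff_divide_distrib inverse_eq_divide)
  qed
  then show "\<forall>\<^sub>F n in sequentially. t - inverse (2^n) \<le> real (nat \<lfloor>t * 2^n\<rfloor>) / 2^n"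
    "\<forall>\<^sub>F n in sequentially. real (nat \<lfloor>t * 2^n\<rfloor>) / 2^n \<le> t"
    by (simp_all add: always_eventually)
  show "(\<lambda>n. t - inverse (2^n)) \<longlonglongrightarrow> t"
    using tendsto_diff[OF tendsto_const LIMSEQ_inverse_realpow_zero[of 2]] by simp
qed simp

text \<open>If \<open>h\<close> halves every set, \<open>dyadic_sets h E n k\<close> carries the fraction \<open>k / 2^n\<close> of every
  integral over \<open>E\<close>: an odd index adds to its lower neighbour half of the gap to its upper one.\<close>

fun dyadic_sets :: "('a set \<Rightarrow> 'a set) \<Rightarrow> 'a set \<Rightarrow> nat \<Rightarrow> nat \<Rightarrow> 'a set" where
  "dyadic_sets h E 0 k = (if k = 0 then {} else E)"
| "dyadic_sets h E (Suc n) k =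
    (if even k then dyadic_sets h E n (k div 2)
     else dyadic_sets h E n (k div 2) \<union> h (dyadic_sets h E n (Suc (k div 2)) - dyadic_sets h E n (k div 2)))"

lemma dyadic_sets_Suc_double [simp]: "dyadic_sets h E (Suc n) (2 * k) = dyadic_sets h E n k"
  by simp

context finite_measure
begin

definition halves :: "('a \<Rightarrow> real) set \<Rightarrow> 'a set \<Rightarrow> 'a set \<Rightarrow> bool" where
  "halves T X H \<longleftrightarrow> H \<in> sets M \<and> H \<subseteq> X \<and> (\<forall>g\<in>T. (LINT x:H|M. g x) = (LINT x:X|M. g x) / 2)"

definition proportional_chain :: "('a \<Rightarrow> real) set \<Rightarrow> 'a set \<Rightarrow> (real \<Rightarrow> 'a set) \<Rightarrow> bool" where
  "proportional_chain T E C \<longleftrightarrow> (\<forall>t. C t \<in> sets M \<and> C t \<subseteq> E) \<and> mono C \<and>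
     (\<forall>t\<in>{0..1}. \<forall>g\<in>T. (LINT x:C t|M. g x) = t * (LINT x:E|M. g x))"

context
  fixes T :: "('a \<Rightarrow> real) set" and h :: "'a set \<Rightarrow> 'a set" and E :: "'a set"
  assumes h: "\<And>X. X \<in> sets M \<Longrightarrow> halves T X (h X)" and E: "E \<in> sets M"
begin

lemma dyadic_sets_in_sets: "dyadic_sets h E n k \<in> sets M \<and> dyadic_sets h E n k \<subseteq> E"
proof (induction n arbitrary: k)
  case 0
  then show ?case using E by auto
next
  case (Suc n)
  have gap: "dyadic_sets h E n (Suc (k div 2)) - dyadic_sets h E n (k div 2) \<in> sets M"
    using Suc by auto
  show ?case
    using h[OF gap] Suc by (auto simp: halves_def)
qed

lemma dyadic_sets_mono:
  assumes "k \<le> k'"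
  shows "dyadic_sets h E n k \<subseteq> dyadic_sets h E n k'"
proof -
  have "dyadic_sets h E n k \<subseteq> dyadic_sets h E n (Suc k)" for n k
  proof (induction n arbitrary: k)
    case (Suc n)
    have "dyadic_sets h E n (Suc (k div 2)) - dyadic_sets h E n (k div 2) \<in> sets M"
      using dyadic_sets_in_sets by auto
    then have "h (dyadic_sets h E n (Suc (k div 2)) - dyadic_sets h E n (k div 2))
          \<subseteq> dyadic_sets h E n (Suc (k div 2))"
      using h by (auto simp: halves_def)
    moreover have "odd k \<Longrightarrow> Suc k div 2 = Suc (k div 2)"
      by presburger
    ultimately show ?case
      using Suc[of "k div 2"] by auto
  qed simp
  then show ?thesis
    using lift_Suc_mono_le[of "dyadic_sets h E n"] assms by blast
qed

lemma set_integral_dyadic_sets: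
  assumes T: "\<And>g. g \<in> T \<Longrightarrow> unit_bounded g" and g: "g \<in> T" and k: "k \<le> 2^n"
  shows "(LINT x:dyadic_sets h E n k|M. g x) = real k / 2^n * (LINT x:E|M. g x)"
  using k
proof (induction n arbitrary: k)
  case 0
  then have "k = 0 \<or> k = 1" by auto
  then show ?case by (auto simp: set_lebesgue_integral_def)
next
  case (Suc n)
  show ?case
  proof (cases "even k")
    case True
    then obtain j where "k = 2 * j" by blast
    then show ?thesis
      using Suc by (simp add: field_simps)
  next
    case False
    then obtain j where j: "k = 2 * j + 1" using oddE by blast
    let ?lo = "dyadic_sets h E n j" and ?hi = "dyadic_sets h E n (Suc j)"
    have gap: "?hi - ?lo \<in> sets M"
      using dyadic_sets_in_sets by auto
    have "(LINT x:dyadic_sets h E (Suc n) k|M. g x) = (LINT x:?lo \<union> h (?hi - ?lo)|M. g x)"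
      using j by simp
    also have "\<dots> = (LINT x:?lo|M. g x) + (LINT x:h (?hi - ?lo)|M. g x)"
      using h[OF gap] dyadic_sets_in_sets
      by (intro set_integral_Un set_integrable_unit_bounded[OF T[OF g]]) (auto simp: halves_def)
    also have "(LINT x:h (?hi - ?lo)|M. g x) = ((LINT x:?hi|M. g x) - (LINT x:?lo|M. g x)) / 2"
      using h[OF gap] g dyadic_sets_in_sets dyadic_sets_mono[of j "Suc j"]
      by (simp add: halves_def set_integral_Diff_unit_bounded[OF T[OF g]])
    finally have "(LINT x:dyadic_sets h E (Suc n) k|M. g x)
        = (LINT x:?lo|M. g x) + ((LINT x:?hi|M. g x) - (LINT x:?lo|M. g x)) / 2" .
    moreover have "Suc j \<le> 2^n"
      using Suc.prems j by simp
    ultimately show ?thesis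
      using Suc.IH[of j] Suc.IH[of "Suc j"] j by (simp add: field_simps)
  qed
qed

lemma proportional_chain_dyadic_sets:
  assumes T: "\<And>g. g \<in> T \<Longrightarrow> unit_bounded g"
  shows "proportional_chain T E (\<lambda>t. \<Union>n. dyadic_sets h E n (nat \<lfloor>t * 2^n\<rfloor>))"
proof -
  let ?D = "\<lambda>(t::real) n. dyadic_sets h E n (nat \<lfloor>t * 2^n\<rfloor>)"
  have D: "?D t n \<in> sets M" "?D t n \<subseteq> E" for t n
    using dyadic_sets_in_sets by auto
  have "mono (\<lambda>t. \<Union>n. ?D t n)"
    by (intro monoI UN_mono dyadic_sets_mono nat_mono floor_mono mult_right_mono) auto
  moreover have "(LINT x:(\<Union>n. ?D t n)|M. g x) = t * (LINT x:E|M. g x)"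
    if t: "t \<in> {0..1}" and g: "g \<in> T" for t g
  proof (rule LIMSEQ_unique)
    have "2 * \<lfloor>t * 2^n\<rfloor> \<le> \<lfloor>t * 2^Suc n\<rfloor>" for n
      by (simp add: le_floor_iff)
    then have "2 * nat \<lfloor>t * 2^n\<rfloor> \<le> nat \<lfloor>t * 2^Suc n\<rfloor>" for n
      by (metis nat_mono nat_mult_distrib nat_numeral zero_le_numeral)
    then have "incseq (?D t)"
      by (intro incseq_SucI) (metis dyadic_sets_Suc_double dyadic_sets_mono)
    then show "(\<lambda>n. LINT x:?D t n|M. g x) \<longlonglongrightarrow> (LINT x:(\<Union>n. ?D t n)|M. g x)"
      using D by (intro set_integral_cont_up set_integrable_unit_bounded T g) auto
    have "nat \<lfloor>t * 2^n\<rfloor> \<le> 2^n" for n :: nat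
    proof -
      have "\<lfloor>t * 2^n\<rfloor> \<le> \<lfloor>(2::real)^n\<rfloor>"
        using t by (intro floor_mono) (simp add: mult_left_le_one_le)
      then show ?thesis
        by (simp add: nat_le_iff)
    qed
    then have "(LINT x:?D t n|M. g x) = real (nat \<lfloor>t * 2^n\<rfloor>) / 2^n * (LINT x:E|M. g x)" for n
      by (intro set_integral_dyadic_sets T g)
    then show "(\<lambda>n. LINT x:?D t n|M. g x) \<longlonglongrightarrow> t * (LINT x:E|M. g x)"
      using tendsto_mult_right[OF tendsto_dyadic_floor] t by simp
  qed
  ultimately show ?thesis
    using D unfolding proportional_chain_def by blast
qed

end

lemma proportional_chainD:
  assumes "proportional_chain T E C"
  shows "C t \<in> sets M" "C t \<subseteq> E" "s \<le> t \<Longrightarrow> C s \<subseteq> C t"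
    "t \<in> {0..1} \<Longrightarrow> g \<in> T \<Longrightarrow> (LINT x:C t|M. g x) = t * (LINT x:E|M. g x)"
  using assms unfolding proportional_chain_def mono_def by blast+

context
  fixes T :: "('a \<Rightarrow> real) set" and E :: "'a set" and C :: "real \<Rightarrow> 'a set"
  assumes C: "proportional_chain T E C" and one: "(\<lambda>_. 1) \<in> T" and E: "E \<in> sets M"
begin

lemma measure_proportional_chain:
  assumes "t \<in> {0..1}"
  shows "measure M (C t) = t * measure M E"
  using proportional_chainD(4)[OF C assms one] proportional_chainD(1)[OF C] E
  by (simp add: set_integral_one)

lemma set_integral_proportional_chain_diff_le:
  assumes f: "unit_bounded f" and st: "s \<le> t" "s \<in> {0..1}" "t \<in> {0..1}"
  shows "\<bar>(LINT x:C t|M. f x) - (LINT x:C s|M. f x)\<bar> \<le> (t - s) * measure M E"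
  using abs_set_integral_diff_le_measure_diff[OF f, of "C t" "C s"] proportional_chainD[OF C]
    measure_proportional_chain[of s] measure_proportional_chain[of t] st
  by (simp add: left_diff_distrib)

lemma continuous_on_set_integral_proportional_chain:
  assumes f: "unit_bounded f"
  shows "continuous_on {0..1} (\<lambda>t. LINT x:C t|M. f x)"
proof (rule lipschitz_on_continuous_on)
  show "lipschitz_on (measure M E) {0..1} (\<lambda>t. LINT x:C t|M. f x)"
  proof (rule lipschitz_onI)
    fix s t :: real
    assume st: "s \<in> {0..1}" "t \<in> {0..1}"
    show "dist (LINT x:C s|M. f x) (LINT x:C t|M. f x) \<le> measure M E * dist s t"
    proof (cases "s \<le> t")
      case True
      then show ?thesis
        using set_integral_proportional_chain_diff_le[OF f True st]
        by (simp add: dist_real_def abs_minus_commute mult.commute)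
    next
      case False
      then show ?thesis
        using set_integral_proportional_chain_diff_le[OF f _ st(2,1)]
        by (simp add: dist_real_def mult.commute)
    qed
  qed simp
qed

lemma set_integral_proportional_chain_0:
  assumes f: "unit_bounded f"
  shows "(LINT x:C 0|M. f x) = 0"
  using abs_set_integral_le_measure[OF f proportional_chainD(1)[OF C, of 0]] measure_proportional_chain[of 0]
  by simp

lemma set_integral_proportional_chain_1:
  assumes f: "unit_bounded f"
  shows "(LINT x:C 1|M. f x) = (LINT x:E|M. f x)"
  using abs_set_integral_diff_le_measure_diff[OF f E proportional_chainD(1,2)[OF C, of 1]]
    measure_proportional_chain[of 1]
  by simp

end

lemma proportional_chain_if_halves:
  assumes T: "\<And>g. g \<in> T \<Longrightarrow> unit_bounded g" and halving: "\<And>X. X \<in> sets M \<Longrightarrow> \<exists>H. halves T X H"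
    and E: "E \<in> sets M"
  shows "\<exists>C. proportional_chain T E C"
proof
  have "halves T X (SOME H. halves T X H)" if "X \<in> sets M" for X
    using someI_ex[OF halving[OF that]] .
  then show "proportional_chain T E (\<lambda>t. \<Union>n. dyadic_sets (\<lambda>X. SOME H. halves T X H) E n (nat \<lfloor>t * 2^n\<rfloor>))"
    by (rule proportional_chain_dyadic_sets[OF _ E T])
qed

lemma set_integral_Un_Diff_unit_bounded:
  assumes g: "unit_bounded g" and sets: "A \<in> sets M" "D \<in> sets M" "E \<in> sets M"
    and "D \<subseteq> E" "A \<inter> E = {}"
  shows "(LINT x:A \<union> (E - D)|M. g x) = (LINT x:A|M. g x) + ((LINT x:E|M. g x) - (LINT x:D|M. g x))"
proof -
  have "(LINT x:A \<union> (E - D)|M. g x) = (LINT x:A|M. g x) + (LINT x:E - D|M. g x)"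
    using assms by (intro set_integral_Un set_integrable_unit_bounded[OF g]) auto
  then show ?thesis
    using assms by (simp add: set_integral_Diff_unit_bounded[OF g])
qed

lemma proportional_chains_exchange_midpoint:
  assumes T: "\<And>g. g \<in> T \<Longrightarrow> unit_bounded g" and one: "(\<lambda>_. 1) \<in> T" and f: "unit_bounded f"
    and E: "E1 \<in> sets M" "E2 \<in> sets M" "E1 \<inter> E2 = {}"
    and B: "proportional_chain T E1 B" and D: "proportional_chain T E2 D"
  shows "\<exists>u\<in>{0..1}. (LINT x:B u \<union> (E2 - D u)|M. f x) = ((LINT x:E1|M. f x) + (LINT x:E2|M. f x)) / 2"
proof -
  have exchange: "(LINT x:B u \<union> (E2 - D u)|M. f x) = (LINT x:B u|M. f x) + ((LINT x:E2|M. f x) - (LINT x:D u|M. f x))"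
    for u
    using proportional_chainD(1,2)[OF B, of u] proportional_chainD(1,2)[OF D, of u] E
    by (intro set_integral_Un_Diff_unit_bounded[OF f]) auto
  have "continuous_on {0..1} (\<lambda>u. (LINT x:B u|M. f x) + ((LINT x:E2|M. f x) - (LINT x:D u|M. f x)))"
    using continuous_on_set_integral_proportional_chain[OF B one E(1) f]
      continuous_on_set_integral_proportional_chain[OF D one E(2) f]
    by (intro continuous_intros)
  then have cont: "continuous_on (closed_segment 0 1) (\<lambda>u. LINT x:B u \<union> (E2 - D u)|M. f x)"
    by (simp add: exchange closed_segment_eq_real_ivl)
  have "(LINT x:B 0 \<union> (E2 - D 0)|M. f x) = (LINT x:E2|M. f x)"
    "(LINT x:B 1 \<union> (E2 - D 1)|M. f x) = (LINT x:E1|M. f x)"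
    using set_integral_proportional_chain_0[OF B one E(1) f] set_integral_proportional_chain_1[OF B one E(1) f]
      set_integral_proportional_chain_0[OF D one E(2) f] set_integral_proportional_chain_1[OF D one E(2) f]
    by (simp_all add: exchange)
  moreover have "((LINT x:E1|M. f x) + (LINT x:E2|M. f x)) / 2 = midpoint (LINT x:E2|M. f x) (LINT x:E1|M. f x)"
    by (simp add: midpoint_def)
  ultimately have "((LINT x:E1|M. f x) + (LINT x:E2|M. f x)) / 2
      \<in> closed_segment (LINT x:B 0 \<union> (E2 - D 0)|M. f x) (LINT x:B 1 \<union> (E2 - D 1)|M. f x)"
    using midpoint_in_closed_segment by simp
  then obtain u where "u \<in> closed_segment 0 1"
    "(LINT x:B u \<union> (E2 - D u)|M. f x) = ((LINT x:E1|M. f x) + (LINT x:E2|M. f x)) / 2"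
    using IVT'_closed_segment_real[OF _ cont] by blast
  then show ?thesis
    by (auto simp: closed_segment_eq_real_ivl)
qed

lemma halves_insert:
  assumes T: "\<And>g. g \<in> T \<Longrightarrow> unit_bounded g" and one: "(\<lambda>_. 1) \<in> T" and f: "unit_bounded f"
    and chains: "\<And>E. E \<in> sets M \<Longrightarrow> \<exists>C. proportional_chain T E C" and X: "X \<in> sets M"
  shows "\<exists>H. halves (insert f T) X H"
proof -
  obtain C where C: "proportional_chain T X C"
    using chains[OF X] by blast
  define E1 where "E1 = C (1/2)"
  define E2 where "E2 = X - E1"
  have E: "E1 \<in> sets M" "E2 \<in> sets M" "E1 \<inter> E2 = {}" "X = E1 \<union> E2"
    using proportional_chainD(1,2)[OF C, of "1/2"] X by (auto simp: E1_def E2_def)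
  have split: "(LINT x:X|M. g x) = (LINT x:E1|M. g x) + (LINT x:E2|M. g x)" if "unit_bounded g" for g
    using E by (simp add: set_integral_Un set_integrable_unit_bounded[OF that])
  have half: "(LINT x:E1|M. g x) = (LINT x:X|M. g x) / 2" "(LINT x:E2|M. g x) = (LINT x:X|M. g x) / 2"
    if "g \<in> T" for g
    using proportional_chainD(4)[OF C, of "1/2" g] split[OF T[OF that]] that by (auto simp: E1_def)
  obtain B D where B: "proportional_chain T E1 B" and D: "proportional_chain T E2 D"
    using chains E(1,2) by meson
  \<comment> \<open>Since \<open>E1\<close> and \<open>E2\<close> carry equal halves of every integral in \<open>T\<close>, exchanging the part
    \<open>D u\<close> of \<open>E2\<close> for the part \<open>B u\<close> of \<open>E1\<close> preserves these halves for every \<open>u\<close>.\<close>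
  obtain u where u: "u \<in> {0..1}" "(LINT x:B u \<union> (E2 - D u)|M. f x) = (LINT x:X|M. f x) / 2"
    using proportional_chains_exchange_midpoint[OF T one f E(1-3) B D] split[OF f] by auto
  have "(LINT x:B u \<union> (E2 - D u)|M. g x) = (LINT x:X|M. g x) / 2" if "g \<in> T" for g
    using set_integral_Un_Diff_unit_bounded[OF T[OF that] proportional_chainD(1)[OF B] proportional_chainD(1)[OF D]
        E(2) proportional_chainD(2)[OF D], of u u] proportional_chainD(2)[OF B, of u] E(3)
      proportional_chainD(4)[OF B u(1) that] proportional_chainD(4)[OF D u(1) that] half[OF that]
    by (auto simp: field_simps)
  moreover have "B u \<union> (E2 - D u) \<in> sets M" "B u \<union> (E2 - D u) \<subseteq> X"
    using proportional_chainD(1,2)[OF B, of u] proportional_chainD(1,2)[OF D, of u] E by auto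
  ultimately have "halves (insert f T) X (B u \<union> (E2 - D u))"
    using u(2) by (simp add: halves_def)
  then show ?thesis ..
qed

lemma proportional_chain_exists:
  assumes na: "nonatomic M" and S: "finite S" "\<And>g. g \<in> S \<Longrightarrow> unit_bounded g" and E: "E \<in> sets M"
  shows "\<exists>C. proportional_chain (insert (\<lambda>_. 1) S) E C"
  using S E
proof (induction S arbitrary: E rule: finite_induct)
  case empty
  have halving: "\<exists>H. halves {\<lambda>_. 1} X H" if "X \<in> sets M" for X
    using nonatomic_measure_attains[OF na that, of "measure M X / 2"] that
    by (auto simp: halves_def set_integral_one)
  show ?case
    by (rule proportional_chain_if_halves[OF _ halving empty.prems(2)]) (use unit_bounded_one in auto)
next
  case (insert f S)
  have halving: "\<exists>H. halves (insert f (insert (\<lambda>_. 1) S)) X H" if "X \<in> sets M" for X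
    by (rule halves_insert) (use insert that unit_bounded_one in auto)
  have "\<exists>C. proportional_chain (insert f (insert (\<lambda>_. 1) S)) E C"
    by (rule proportional_chain_if_halves[OF _ halving insert.prems(2)]) (use insert.prems(1) unit_bounded_one in auto)
  then show ?case
    by (simp add: insert_commute)
qed

lemma lyapunov_unit_bounded:
  assumes "nonatomic M" "finite S" "\<And>g. g \<in> S \<Longrightarrow> unit_bounded g" and \<theta>: "\<theta> \<in> {0..1}"
  shows "\<exists>A\<in>sets M. \<forall>g\<in>S. (LINT x:A|M. g x) = \<theta> * (LINT x:space M|M. g x)"
proof -
  obtain C where "proportional_chain (insert (\<lambda>_. 1) S) (space M) C"
    using proportional_chain_exists[OF assms(1-3)] by blast
  then have "C \<theta> \<in> sets M" "\<forall>g\<in>S. (LINT x:C \<theta>|M. g x) = \<theta> * (LINT x:space M|M. g x)"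
    using proportional_chainD(1,4) \<theta> by auto
  then show ?thesis ..
qed

context
  fixes w :: "'a \<Rightarrow> real"
  assumes w_integrable: "integrable M w" and w_ge_1: "\<And>x. 1 \<le> w x"
begin

private lemma w_measurable [measurable]: "w \<in> borel_measurable M"
  using w_integrable by blast

private lemma w_nonneg: "AE x in M. 0 \<le> w x"
  using w_ge_1 order_trans[OF zero_le_one] by blast

lemma finite_measure_density: "finite_measure (density M w)"
proof
  have "emeasure (density M w) (space (density M w)) = (\<integral>\<^sup>+ x. ennreal (w x) * indicator (space M) x \<partial>M)"
    by (simp add: emeasure_density)
  also have "\<dots> = (\<integral>\<^sup>+ x. ennreal (w x) \<partial>M)"
    by (intro nn_integral_cong) auto
  also have "\<dots> = ennreal (integral\<^sup>L M w)"
    by (rule nn_integral_eq_integral[OF w_integrable w_nonneg])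
  finally show "emeasure (density M w) (space (density M w)) \<noteq> \<infinity>"
    by simp
qed

lemma measure_density_eq_integral:
  assumes A: "A \<in> sets M"
  shows "measure (density M w) A = (LINT x|M. w x * indicator A x)"
proof -
  interpret N: finite_measure "density M w"
    by (rule finite_measure_density)
  have "measure (density M w) A = (LINT x|density M w. indicator A x)"
    using A sets.sets_into_space[OF A] by (simp add: Int_absorb2)
  also have "\<dots> = (LINT x|M. w x * indicator A x)"
    using A w_integrable by (subst integral_density[OF _ _ w_nonneg]) auto
  finally show ?thesis .
qed

lemma measure_le_measure_density:
  assumes A: "A \<in> sets M"
  shows "measure M A \<le> measure (density M w) A"
proof -
  have "measure M A = (LINT x|M. indicator A x)"
    using A sets.sets_into_space[OF A] by (simp add: Int_absorb2)
  also have "\<dots> \<le> (LINT x|M. w x * indicator A x)"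
    using A w_ge_1 integrable_mult_indicator[OF A w_integrable] integrable_mult_indicator[OF A integrable_const[of "1::real"]]
    by (intro integral_mono) (auto simp: indicator_def mult.commute)
  finally show ?thesis
    using measure_density_eq_integral[OF A] by simp
qed

lemma measure_density_eq_0:
  assumes A: "A \<in> sets M" "measure M A = 0"
  shows "measure (density M w) A = 0"
proof -
  have "A \<in> null_sets M"
    using A by (simp add: emeasure_eq_measure null_sets_def)
  then have "AE x in M. w x * indicator A x = 0"
    by (auto dest: AE_not_in elim!: eventually_mono)
  then show ?thesis
    using A by (simp add: measure_density_eq_integral integral_eq_zero_AE)
qed

lemma nonatomic_density:
  assumes na: "nonatomic M"
  shows "nonatomic (density M w)"
  unfolding nonatomic_def
proof (intro ballI impI)
  interpret N: finite_measure "density M w"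
    by (rule finite_measure_density)
  fix A
  assume A: "A \<in> sets (density M w)" "0 < measure (density M w) A"
  then have "A \<in> sets M" "0 < measure M A"
    using measure_density_eq_0 measure_nonneg[of M A] by (auto simp: less_le)
  then obtain B where B: "B \<in> sets M" "B \<subseteq> A" "0 < measure M B" "measure M B < measure M A"
    using na unfolding nonatomic_def by blast
  have "0 < measure M (A - B)"
    using B \<open>A \<in> sets M\<close> by (simp add: finite_measure_Diff)
  then have "measure (density M w) B < measure (density M w) A"
    using measure_le_measure_density[of "A - B"] B \<open>A \<in> sets M\<close> by (simp add: N.finite_measure_Diff)
  then show "\<exists>B\<in>sets (density M w). B \<subseteq> A \<and> 0 < measure (density M w) B \<and> measure (density M w) B < measure (density M w) A"
    using B measure_le_measure_density[OF B(1)] by (intro bexI[of _ B]) auto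
qed

lemma set_integral_density_divide:
  assumes h: "h \<in> borel_measurable M" and A: "A \<in> sets M"
  shows "(LINT x:A|density M w. h x / w x) = (LINT x:A|M. h x)"
proof -
  have "(LINT x:A|density M w. h x / w x) = (LINT x|M. w x *\<^sub>R (indicator A x *\<^sub>R (h x / w x)))"
    unfolding set_lebesgue_integral_def using h A w_integrable
    by (intro integral_density[OF _ _ w_nonneg]) auto
  also have "\<dots> = (LINT x:A|M. h x)"
    unfolding set_lebesgue_integral_def using w_ge_1
    by (intro Bochner_Integration.integral_cong) (auto simp: order.strict_trans2[OF zero_less_one] less_imp_neq[symmetric])
  finally show ?thesis .
qed

end

lemma lyapunov_convexity:
  fixes S :: "('a \<Rightarrow> real) set"
  assumes na: "nonatomic M" and S: "finite S" "\<And>h. h \<in> S \<Longrightarrow> integrable M h" and \<theta>: "\<theta> \<in> {0..1}"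
  shows "\<exists>A\<in>sets M. \<forall>h\<in>S. (LINT x:A|M. h x) = \<theta> * (LINT x|M. h x)"
proof -
  \<comment> \<open>Each \<open>h / w\<close> is bounded by 1, and its integrals for \<open>density M w\<close> are those of \<open>h\<close>.\<close>
  define w where "w x = 1 + (\<Sum>h\<in>S. \<bar>h x\<bar>)" for x
  have w: "integrable M w" "1 \<le> w x" for x
    unfolding w_def using S by (auto intro!: sum_nonneg)
  interpret N: finite_measure "density M w"
    by (rule finite_measure_density[OF w])
  have bounded: "N.unit_bounded (\<lambda>x. h x / w x)" if h: "h \<in> S" for h
  proof -
    have "\<bar>h x\<bar> \<le> w x" for x
      unfolding w_def using member_le_sum[of h S "\<lambda>h. \<bar>h x\<bar>"] S(1) h by simp
    then have "\<bar>h x / w x\<bar> \<le> 1" for x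
      using w(2)[of x] by (simp add: abs_divide)
    moreover have "(\<lambda>x. h x / w x) \<in> borel_measurable M"
      using S(2)[OF h] w(1) by (intro borel_measurable_divide) auto
    ultimately show ?thesis
      by (simp add: N.unit_bounded_def)
  qed
  obtain A where A: "A \<in> sets M"
    "\<forall>h\<in>S. (LINT x:A|density M w. h x / w x) = \<theta> * (LINT x:space M|density M w. h x / w x)"
    using N.lyapunov_unit_bounded[OF nonatomic_density[OF w na] _ _ \<theta>, of "(\<lambda>h x. h x / w x) ` S"]
      S(1) bounded by auto
  have "(LINT x:A|M. h x) = \<theta> * (LINT x|M. h x)" if h: "h \<in> S" for h
  proof -
    have "h \<in> borel_measurable M"
      using S(2)[OF h] by blast
    moreover have "(LINT x:A|density M w. h x / w x) = \<theta> * (LINT x:space M|density M w. h x / w x)"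
      using A(2) h by blast
    ultimately show ?thesis
      using set_integral_density_divide[OF w _ A(1)] set_integral_density_divide[OF w _ sets.top]
        set_integral_space[OF S(2)[OF h]]
      by simp
  qed
  then show ?thesis
    using A(1) by blast
qed

lemma lyapunov_splice:
  fixes f g :: "'i \<Rightarrow> 'a \<Rightarrow> real"
  assumes na: "nonatomic M" and I: "finite I" and f: "\<And>i. i \<in> I \<Longrightarrow> integrable M (f i)"
    and g: "\<And>i. i \<in> I \<Longrightarrow> integrable M (g i)" and u: "u \<in> {0..1}"
  shows "\<exists>A\<in>sets M. \<forall>i\<in>I.
    (LINT x|M. (if x \<in> A then f i x else g i x)) = u * (LINT x|M. f i x) + (1 - u) * (LINT x|M. g i x)"
proof -
  obtain A where A: "A \<in> sets M"
    "\<forall>h\<in>(\<lambda>i x. f i x - g i x) ` I. (LINT x:A|M. h x) = u * (LINT x|M. h x)"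
    using lyapunov_convexity[OF na _ _ u, of "(\<lambda>i x. f i x - g i x) ` I"] I f g by auto
  have "(LINT x|M. (if x \<in> A then f i x else g i x)) = u * (LINT x|M. f i x) + (1 - u) * (LINT x|M. g i x)"
    if i: "i \<in> I" for i
  proof -
    have "(LINT x|M. (if x \<in> A then f i x else g i x)) = (LINT x|M. g i x + indicator A x *\<^sub>R (f i x - g i x))"
      by (intro Bochner_Integration.integral_cong) (auto simp: indicator_def)
    also have "\<dots> = (LINT x|M. g i x) + (LINT x:A|M. f i x - g i x)"
      unfolding set_lebesgue_integral_def using A(1) f[OF i] g[OF i]
      by (intro Bochner_Integration.integral_add integrable_mult_indicator) auto
    also have "(LINT x:A|M. f i x - g i x) = u * ((LINT x|M. f i x) - (LINT x|M. g i x))"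
      using A(2) i f[OF i] g[OF i] by auto
    finally show ?thesis
      by (simp add: algebra_simps)
  qed
  then show ?thesis
    using A(1) by blast
qed

end

section \<open>Mixing policies\<close>

lemma feasible_policies_splice:
  assumes "p1 \<in> feasible_policies M Pmax \<sigma>" "p2 \<in> feasible_policies M Pmax \<sigma>" "A \<in> sets M"
  shows "(\<lambda>H. if H \<in> A then p1 H else p2 H) \<in> feasible_policies M Pmax \<sigma>"
  using assms measurable_If_set[of p1 M _ p2 A] by (auto simp: feasible_policies_def)

lemma objective_ge_convex_combination:
  assumes g: "concave_on UNIV g" and u: "u \<in> {0..1}"
    and mix: "\<And>j. (LINT H|M. f0 (p H) H $ j)
      = u * (LINT H|M. f0 (p1 H) H $ j) + (1 - u) * (LINT H|M. f0 (p2 H) H $ j)"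
  shows "u * objective M g f0 p1 + (1 - u) * objective M g f0 p2 \<le> objective M g f0 p"
proof -
  have "(\<chi> j. LINT H|M. f0 (p H) H $ j)
      = (1 - (1 - u)) *\<^sub>R (\<chi> j. LINT H|M. f0 (p1 H) H $ j) + (1 - u) *\<^sub>R (\<chi> j. LINT H|M. f0 (p2 H) H $ j)"
    by (simp add: vec_eq_iff mix)
  then show ?thesis
    unfolding objective_def using concave_onD[OF g, of "1 - u"] u by simp
qed

lemma cond_constraint_convex_combination:
  assumes "(LINT H:{H\<in>space M. \<sigma> H i}|M. fc i (p H) H)
    = u * (LINT H:{H\<in>space M. \<sigma> H i}|M. fc i (p1 H) H) + (1 - u) * (LINT H:{H\<in>space M. \<sigma> H i}|M. fc i (p2 H) H)"
  shows "cond_constraint M \<sigma> fc p i = u * cond_constraint M \<sigma> fc p1 i + (1 - u) * cond_constraint M \<sigma> fc p2 i"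
  using assms by (simp add: cond_constraint_def add_divide_distrib)

lemma mixed_policy_exists:
  fixes M :: "'h::topological_space measure" and f0 :: "real^'n::finite \<Rightarrow> 'h \<Rightarrow> real^'n"
  assumes "finite_measure M" and na: "nonatomic M" and g: "concave_on UNIV g" and \<sigma>: "\<And>i. {H\<in>space M. \<sigma> H i} \<in> sets M"
    and p1: "p1 \<in> feasible_policies M Pmax \<sigma>" and p2: "p2 \<in> feasible_policies M Pmax \<sigma>"
    and f0_int: "\<And>p. p \<in> feasible_policies M Pmax \<sigma> \<Longrightarrow> integrable M (\<lambda>H. f0 (p H) H)"
    and fc_int: "\<And>p i. p \<in> feasible_policies M Pmax \<sigma> \<Longrightarrow> integrable M (\<lambda>H. fc i (p H) H)"
    and u: "u \<in> {0..1}"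
  shows "\<exists>p\<in>feasible_policies M Pmax \<sigma>.
    u * objective M g f0 p1 + (1 - u) * objective M g f0 p2 \<le> objective M g f0 p \<and>
    (\<forall>i. cond_constraint M \<sigma> fc p i = u * cond_constraint M \<sigma> fc p1 i + (1 - u) * cond_constraint M \<sigma> fc p2 i)"
proof -
  interpret finite_measure M
    by fact
  define F where "F q = case_sum (\<lambda>j H. f0 (q H) H $ j) (\<lambda>i H. indicator {H\<in>space M. \<sigma> H i} H * fc i (q H) H)"
    for q :: "'h \<Rightarrow> real^'n"
  have "integrable M (F q k)" if "q \<in> feasible_policies M Pmax \<sigma>" for q k
    using integrable_bounded_linear[OF bounded_linear_vec_nth f0_int[OF that]]
      integrable_mult_indicator[OF \<sigma> fc_int[OF that]]
    by (cases k) (auto simp: F_def)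
  then obtain A where A: "A \<in> sets M" "\<forall>k\<in>UNIV.
      (LINT H|M. (if H \<in> A then F p1 k H else F p2 k H)) = u * (LINT H|M. F p1 k H) + (1 - u) * (LINT H|M. F p2 k H)"
    using lyapunov_splice[OF na finite _ _ u, of UNIV "F p1" "F p2"] p1 p2 by blast
  define p where "p H = (if H \<in> A then p1 H else p2 H)" for H
  have "F p k = (\<lambda>H. if H \<in> A then F p1 k H else F p2 k H)" for k
    by (cases k) (auto simp: F_def p_def)
  then have mix: "(LINT H|M. F p k H) = u * (LINT H|M. F p1 k H) + (1 - u) * (LINT H|M. F p2 k H)" for k
    using A(2) by simp
  show ?thesis
  proof (intro bexI conjI allI)
    show "p \<in> feasible_policies M Pmax \<sigma>"
      unfolding p_def by (rule feasible_policies_splice[OF p1 p2 A(1)])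
    show "u * objective M g f0 p1 + (1 - u) * objective M g f0 p2 \<le> objective M g f0 p"
      by (rule objective_ge_convex_combination[OF g u]) (use mix[of "Inl _"] in \<open>simp add: F_def\<close>)
    show "cond_constraint M \<sigma> fc p i = u * cond_constraint M \<sigma> fc p1 i + (1 - u) * cond_constraint M \<sigma> fc p2 i" for i
      by (rule cond_constraint_convex_combination) (use mix[of "Inr i"] in \<open>simp add: F_def set_lebesgue_integral_def\<close>)
  qed
qed

lemma mem_achievable_set:
  "z \<in> achievable_set M Pmax \<sigma> g f0 fc c \<longleftrightarrow> (\<exists>p\<in>feasible_policies M Pmax \<sigma>.
     fst z \<le> objective M g f0 p \<and> (\<forall>i. snd z $ i + c $ i \<le> cond_constraint M \<sigma> fc p i))"
  by (cases z) (simp add: achievable_set_def)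

lemma convex_combination_mem_achievable_set:
  assumes x: "x \<in> achievable_set M Pmax \<sigma> g f0 fc c" and y: "y \<in> achievable_set M Pmax \<sigma> g f0 fc c"
    and uv: "0 \<le> u" "0 \<le> v" "u + v = 1"
    and mixing: "\<And>p1 p2. p1 \<in> feasible_policies M Pmax \<sigma> \<Longrightarrow> p2 \<in> feasible_policies M Pmax \<sigma> \<Longrightarrow>
      \<exists>p\<in>feasible_policies M Pmax \<sigma>. u * objective M g f0 p1 + v * objective M g f0 p2 \<le> objective M g f0 p \<and>
        (\<forall>i. cond_constraint M \<sigma> fc p i = u * cond_constraint M \<sigma> fc p1 i + v * cond_constraint M \<sigma> fc p2 i)"
  shows "u *\<^sub>R x + v *\<^sub>R y \<in> achievable_set M Pmax \<sigma> g f0 fc c"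
proof -
  obtain p1 where p1: "p1 \<in> feasible_policies M Pmax \<sigma>" "fst x \<le> objective M g f0 p1"
    "\<And>i. snd x $ i + c $ i \<le> cond_constraint M \<sigma> fc p1 i"
    using x unfolding mem_achievable_set by blast
  obtain p2 where p2: "p2 \<in> feasible_policies M Pmax \<sigma>" "fst y \<le> objective M g f0 p2"
    "\<And>i. snd y $ i + c $ i \<le> cond_constraint M \<sigma> fc p2 i"
    using y unfolding mem_achievable_set by blast
  obtain p where p: "p \<in> feasible_policies M Pmax \<sigma>"
    "u * objective M g f0 p1 + v * objective M g f0 p2 \<le> objective M g f0 p"
    "\<And>i. cond_constraint M \<sigma> fc p i = u * cond_constraint M \<sigma> fc p1 i + v * cond_constraint M \<sigma> fc p2 i"
    using mixing[OF p1(1) p2(1)] by blast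
  have "fst (u *\<^sub>R x + v *\<^sub>R y) \<le> objective M g f0 p"
    using mult_left_mono[OF p1(2) uv(1)] mult_left_mono[OF p2(2) uv(2)] p(2) by simp
  moreover have "snd (u *\<^sub>R x + v *\<^sub>R y) $ i + c $ i \<le> cond_constraint M \<sigma> fc p i" for i
  proof -
    have "snd (u *\<^sub>R x + v *\<^sub>R y) $ i + (u + v) * c $ i = u * (snd x $ i + c $ i) + v * (snd y $ i + c $ i)"
      by (simp add: algebra_simps)
    then show ?thesis
      using mult_left_mono[OF p1(3)[of i] uv(1)] mult_left_mono[OF p2(3)[of i] uv(2)] p(3)[of i] uv(3)
      by simp
  qed
  ultimately show ?thesis
    unfolding mem_achievable_set using p(1) by blast
qed

theorem lemma1:
  fixes M :: "(real^'n^'n) measure"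
    and \<H> :: "(real^'n^'n) set"
    and Pmax :: real
    and \<sigma> :: "real^'n^'n \<Rightarrow> 'n::finite \<Rightarrow> bool"
    and f0 :: "real^'n \<Rightarrow> real^'n^'n \<Rightarrow> real^'n"
    and fc :: "'n \<Rightarrow> real^'n \<Rightarrow> real^'n^'n \<Rightarrow> real"
    and g :: "real^'n \<Rightarrow> real"
    and c :: "real^'n"
  assumes prob: "prob_space M"
    and sets_M: "sets M = sets (restrict_space borel \<H>)"
    and space_M: "space M = \<H>"
    and Pmax_pos: "Pmax > 0"
    and sigma_meas: "\<And>i. {H\<in>space M. \<sigma> H i} \<in> sets M"
    and rho_pos: "\<And>i. measure M {H\<in>space M. \<sigma> H i} > 0"
    and f0_meas: "(\<lambda>(x, H). f0 x H) \<in> borel_measurable borel"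
    and fc_meas: "\<And>i. (\<lambda>(x, H). fc i x H) \<in> borel_measurable borel"
    and f0_int: "\<And>p. p \<in> feasible_policies M Pmax \<sigma> \<Longrightarrow> integrable M (\<lambda>H. f0 (p H) H)"
    and fc_int: "\<And>p i. p \<in> feasible_policies M Pmax \<sigma> \<Longrightarrow> integrable M (\<lambda>H. fc i (p H) H)"
    and c_nonneg: "\<And>i. c $ i \<ge> 0"
    and AS1: "nonatomic M"
    and AS2_concave: "concave_on UNIV g"
    and AS2_mono: "\<And>x y. (\<And>j. x $ j \<le> y $ j) \<Longrightarrow> g x \<le> g y"
  shows "convex (achievable_set M Pmax \<sigma> g f0 fc c)"
proof (rule convexI)
  interpret prob_space M
    by (rule prob)
  fix x y :: "real \<times> (real^'n)" and u v :: real
  assume "x \<in> achievable_set M Pmax \<sigma> g f0 fc c" "y \<in> achievable_set M Pmax \<sigma> g f0 fc c"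
    and uv: "0 \<le> u" "0 \<le> v" "u + v = 1"
  moreover have "\<exists>p\<in>feasible_policies M Pmax \<sigma>.
      u * objective M g f0 p1 + v * objective M g f0 p2 \<le> objective M g f0 p \<and>
      (\<forall>i. cond_constraint M \<sigma> fc p i = u * cond_constraint M \<sigma> fc p1 i + v * cond_constraint M \<sigma> fc p2 i)"
    if "p1 \<in> feasible_policies M Pmax \<sigma>" "p2 \<in> feasible_policies M Pmax \<sigma>" for p1 p2
    using mixed_policy_exists[where ?f0.0 = f0 and fc = fc and u = u,
        OF finite_measure_axioms AS1 AS2_concave sigma_meas that f0_int fc_int] uv
    by (simp add: eq_diff_eq[symmetric])
  ultimately show "u *\<^sub>R x + v *\<^sub>R y \<in> achievable_set M Pmax \<sigma> g f0 fc c"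
    by (rule convex_combination_mem_achievable_set)
qed

end
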